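(* Let $G$ be a finitely generated, torsion-free, $2$-step nilpotent group whose maximal ring of scalars is $\mathbb{Z}$. Then $G$ cannot be decomposed as a direct product $G=H\times K$ of two non-abelian subgroups $H,K$.
   Context: Commutators: $[g,h]=g^{-1}h^{-1}gh$. Rings are associative with identity. Let $f:G/Z(G)\times G/Z(G)\to G'$, $f(gZ(G),hZ(G))=[g,h]$. A commutative ring $R$ is a ring of scalars of $G$ if there are faithful actions of $R$ by endomorphisms on $M=G/Z(G)$ and $N=G'$ with $f(rx,y)=f(x,ry)=rf(x,y)$ for all $r\in R$, $x,y\in M$. Identifying each ring of scalars with its image in $\mathrm{End}(M)$, the maximal ring of scalars is the one containing all others (as subrings). *)

theory Defs
  imports "HOL-Algebra.Algebra"
begin

text \<open>Commutator with the paper's convention [g,h] = g^-1 h^-1 g h.\<close>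
definition comm :: "('a, 'b) monoid_scheme \<Rightarrow> 'a \<Rightarrow> 'a \<Rightarrow> 'a" where
  "comm G g h = inv\<^bsub>G\<^esub> g \<otimes>\<^bsub>G\<^esub> inv\<^bsub>G\<^esub> h \<otimes>\<^bsub>G\<^esub> g \<otimes>\<^bsub>G\<^esub> h"

definition grp_center :: "('a, 'b) monoid_scheme \<Rightarrow> 'a set" where
  "grp_center G = {z \<in> carrier G. \<forall>g \<in> carrier G. z \<otimes>\<^bsub>G\<^esub> g = g \<otimes>\<^bsub>G\<^esub> z}"

definition comm_subgroup :: "('a, 'b) monoid_scheme \<Rightarrow> 'a set" where
  "comm_subgroup G = generate G {comm G g h | g h. g \<in> carrier G \<and> h \<in> carrier G}"

definition finitely_generated :: "('a, 'b) monoid_scheme \<Rightarrow> bool" where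
  "finitely_generated G \<longleftrightarrow> (\<exists>S. finite S \<and> S \<subseteq> carrier G \<and> generate G S = carrier G)"

definition torsion_free :: "('a, 'b) monoid_scheme \<Rightarrow> bool" where
  "torsion_free G \<longleftrightarrow> (\<forall>g \<in> carrier G. \<forall>n::nat. n > 0 \<and> g [^]\<^bsub>G\<^esub> n = \<one>\<^bsub>G\<^esub> \<longrightarrow> g = \<one>\<^bsub>G\<^esub>)"

text \<open>2-step nilpotent (nilpotency class at most 2): G' is central.\<close>
definition two_step_nilpotent :: "('a, 'b) monoid_scheme \<Rightarrow> bool" where
  "two_step_nilpotent G \<longleftrightarrow> group G \<and> comm_subgroup G \<subseteq> grp_center G"

definition abelian_subset :: "('a, 'b) monoid_scheme \<Rightarrow> 'a set \<Rightarrow> bool" where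
  "abelian_subset G H \<longleftrightarrow> (\<forall>x \<in> H. \<forall>y \<in> H. x \<otimes>\<^bsub>G\<^esub> y = y \<otimes>\<^bsub>G\<^esub> x)"

definition Mgrp :: "('a, 'b) monoid_scheme \<Rightarrow> 'a set monoid" where
  "Mgrp G = G Mod grp_center G"

definition Ngrp :: "('a, 'b) monoid_scheme \<Rightarrow> ('a, 'b) monoid_scheme" where
  "Ngrp G = G\<lparr>carrier := comm_subgroup G\<rparr>"

text \<open>f(gZ(G), hZ(G)) = [g,h] (well defined for 2-step nilpotent G).\<close>
definition fcomm :: "('a, 'b) monoid_scheme \<Rightarrow> 'a set \<Rightarrow> 'a set \<Rightarrow> 'a" where
  "fcomm G x y = comm G (SOME g. g \<in> x) (SOME h. h \<in> y)"

text \<open>An action of the ring R on the (abelian) group A by endomorphisms,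
  i.e. a unital ring homomorphism R \<rightarrow> End(A); and faithfulness.\<close>
definition endo_action :: "('r, 'c) ring_scheme \<Rightarrow> ('m, 'd) monoid_scheme \<Rightarrow> ('r \<Rightarrow> 'm \<Rightarrow> 'm) \<Rightarrow> bool" where
  "endo_action R A \<rho> \<longleftrightarrow>
     (\<forall>r \<in> carrier R. \<rho> r \<in> hom A A) \<and>
     (\<forall>x \<in> carrier A. \<rho> \<one>\<^bsub>R\<^esub> x = x) \<and>
     (\<forall>r \<in> carrier R. \<forall>s \<in> carrier R. \<forall>x \<in> carrier A.
        \<rho> (r \<oplus>\<^bsub>R\<^esub> s) x = \<rho> r x \<otimes>\<^bsub>A\<^esub> \<rho> s x) \<and>
     (\<forall>r \<in> carrier R. \<forall>s \<in> carrier R. \<forall>x \<in> carrier A.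
        \<rho> (r \<otimes>\<^bsub>R\<^esub> s) x = \<rho> r (\<rho> s x))"

definition faithful_action :: "('r, 'c) ring_scheme \<Rightarrow> ('m, 'd) monoid_scheme \<Rightarrow> ('r \<Rightarrow> 'm \<Rightarrow> 'm) \<Rightarrow> bool" where
  "faithful_action R A \<rho> \<longleftrightarrow> endo_action R A \<rho> \<and>
     (\<forall>r \<in> carrier R. \<forall>s \<in> carrier R. (\<forall>x \<in> carrier A. \<rho> r x = \<rho> s x) \<longrightarrow> r = s)"

definition ring_of_scalars ::
  "('a, 'b) monoid_scheme \<Rightarrow> ('r, 'c) ring_scheme \<Rightarrow> ('r \<Rightarrow> 'a set \<Rightarrow> 'a set) \<Rightarrow> ('r \<Rightarrow> 'a \<Rightarrow> 'a) \<Rightarrow> bool" where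
  "ring_of_scalars G R \<rho>M \<rho>N \<longleftrightarrow>
     cring R \<and> faithful_action R (Mgrp G) \<rho>M \<and> faithful_action R (Ngrp G) \<rho>N \<and>
     (\<forall>r \<in> carrier R. \<forall>x \<in> carrier (Mgrp G). \<forall>y \<in> carrier (Mgrp G).
        fcomm G (\<rho>M r x) y = \<rho>N r (fcomm G x y) \<and>
        fcomm G x (\<rho>M r y) = \<rho>N r (fcomm G x y))"

text \<open>The maximal ring of scalars of G is \<int>: the integers (acting by powers)
  form a ring of scalars, and (identified with its image in End(M)) every ring
  of scalars consists of integer-power maps.  Since a ring of scalars acts
  faithfully on M, it is isomorphic to its image in End(M), which is a ring whose
  elements are functions on M; so it suffices to quantify over rings whose
  carrier type is that of functions on M.\<close>
definition maximal_scalars_is_Z :: "('a, 'b) monoid_scheme \<Rightarrow> bool" where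
  "maximal_scalars_is_Z G \<longleftrightarrow>
     ring_of_scalars G \<Z> (\<lambda>n x. x [^]\<^bsub>Mgrp G\<^esub> (n::int)) (\<lambda>n x. x [^]\<^bsub>Ngrp G\<^esub> (n::int)) \<and>
     (\<forall>(R :: ('a set \<Rightarrow> 'a set) ring) \<rho>M \<rho>N. ring_of_scalars G R \<rho>M \<rho>N \<longrightarrow>
        (\<forall>r \<in> carrier R. \<exists>n::int. \<forall>x \<in> carrier (Mgrp G). \<rho>M r x = x [^]\<^bsub>Mgrp G\<^esub> n))"

end

theory Submission
  imports Defs
begin

text \<open>Suppose \<open>G = H \<times> K\<close> with \<open>H\<close> and \<open>K\<close> non-abelian. The projections onto the factors
  induce compatible splittings \<open>M = M\<^sub>H \<times> M\<^sub>K\<close> of \<open>G/Z(G)\<close> and \<open>N = N\<^sub>H \<times> N\<^sub>K\<close> of \<open>G'\<close>, and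
  the commutator map respects them. Hence \<open>\<int> \<times> \<int>\<close> acts on \<open>M\<close> and \<open>N\<close>, \<open>(a, b)\<close> acting
  as the \<open>a\<close>-th power on the \<open>H\<close>-part and as the \<open>b\<close>-th power on the \<open>K\<close>-part, and this
  makes \<open>\<int> \<times> \<int>\<close> a ring of scalars; the actions are faithful because \<open>G\<close> is torsion-free
  and both factors are non-abelian. But \<open>(1, 0)\<close> acts on \<open>M\<close> as no integer power, so the
  maximal ring of scalars is not \<open>\<int>\<close>.\<close>

section \<open>Complementary projections and the action of \<open>\<int> \<times> \<int>\<close>\<close>

definition proj_pow :: "('m, 'd) monoid_scheme \<Rightarrow> ('m \<Rightarrow> 'm) \<Rightarrow> ('m \<Rightarrow> 'm) \<Rightarrow> int \<times> int \<Rightarrow> 'm \<Rightarrow> 'm"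
  where "proj_pow A p q ab x = p x [^]\<^bsub>A\<^esub> fst ab \<otimes>\<^bsub>A\<^esub> q x [^]\<^bsub>A\<^esub> snd ab"

lemma Z2_simps:
  "carrier (RDirProd \<Z> \<Z>) = UNIV"
  "\<one>\<^bsub>RDirProd \<Z> \<Z>\<^esub> = (1, 1)"
  "r \<otimes>\<^bsub>RDirProd \<Z> \<Z>\<^esub> s = (fst r * fst s, snd r * snd s)"
  "r \<oplus>\<^bsub>RDirProd \<Z> \<Z>\<^esub> s = (fst r + fst s, snd r + snd s)"
  by (simp_all add: RDirProd_def DirProd_def monoid.defs case_prod_beta)

lemma Z2_cring: "cring (RDirProd \<Z> \<Z>)"
proof -
  interpret ring "RDirProd \<Z> \<Z>"
    by (intro RDirProd_ring cring.axioms(1)[OF int_is_cring])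
  show ?thesis
    by unfold_locales (simp add: Z2_simps mult.commute)
qed

lemma (in group) torsion_free_int_pow_inj:
  assumes "torsion_free G" and x: "x \<in> carrier G" "x \<noteq> \<one>" and "x [^] (m::int) = x [^] n"
  shows "m = n"
proof -
  have "ord x = 0"
    using assms unfolding torsion_free_def by (auto simp: ord_eq_0)
  then show ?thesis
    using assms int_pow_eq[OF x(1)] by simp
qed

locale complementary_projections = comm_group A for A :: "('m, 'd) monoid_scheme" (structure) +
  fixes p q :: "'m \<Rightarrow> 'm"
  assumes p_hom: "p \<in> hom A A" and q_hom: "q \<in> hom A A"
    and p_mult_q: "x \<in> carrier A \<Longrightarrow> p x \<otimes> q x = x"
    and p_q: "x \<in> carrier A \<Longrightarrow> p (q x) = \<one>"
    and q_p: "x \<in> carrier A \<Longrightarrow> q (p x) = \<one>"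
begin

lemma p_closed [simp]: "x \<in> carrier A \<Longrightarrow> p x \<in> carrier A"
  and q_closed [simp]: "x \<in> carrier A \<Longrightarrow> q x \<in> carrier A"
  using p_hom q_hom by (auto intro: hom_in_carrier)

lemma p_mult: "x \<in> carrier A \<Longrightarrow> y \<in> carrier A \<Longrightarrow> p (x \<otimes> y) = p x \<otimes> p y"
  and q_mult: "x \<in> carrier A \<Longrightarrow> y \<in> carrier A \<Longrightarrow> q (x \<otimes> y) = q x \<otimes> q y"
  using p_hom q_hom by (auto intro: hom_mult)

lemma p_int_pow: "x \<in> carrier A \<Longrightarrow> p (x [^] (n::int)) = p x [^] n"
  and q_int_pow: "x \<in> carrier A \<Longrightarrow> q (x [^] (n::int)) = q x [^] n"
  using hom_int_pow[OF p_hom] hom_int_pow[OF q_hom] is_group by auto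

lemma p_idem: "x \<in> carrier A \<Longrightarrow> p (p x) = p x"
  using p_mult_q[of "p x"] by (simp add: q_p)

lemma q_idem: "x \<in> carrier A \<Longrightarrow> q (q x) = q x"
  using p_mult_q[of "q x"] by (simp add: p_q)

lemma proj_pow_closed [simp]: "x \<in> carrier A \<Longrightarrow> proj_pow A p q ab x \<in> carrier A"
  by (simp add: proj_pow_def)

lemma proj_pow_p: "x \<in> carrier A \<Longrightarrow> p (proj_pow A p q ab x) = p x [^] fst ab"
  and proj_pow_q: "x \<in> carrier A \<Longrightarrow> q (proj_pow A p q ab x) = q x [^] snd ab"
  by (simp_all add: proj_pow_def p_mult q_mult p_int_pow q_int_pow p_idem q_idem p_q q_p)

lemma proj_pow_fixed_p: "x \<in> carrier A \<Longrightarrow> p x = x \<Longrightarrow> proj_pow A p q ab x = x [^] fst ab"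
  using q_p[of x] by (simp add: proj_pow_def)

lemma proj_pow_fixed_q: "x \<in> carrier A \<Longrightarrow> q x = x \<Longrightarrow> proj_pow A p q ab x = x [^] snd ab"
  using p_q[of x] by (simp add: proj_pow_def)

lemma proj_pow_hom: "proj_pow A p q ab \<in> hom A A"
proof (rule homI)
  fix x y assume x: "x \<in> carrier A" and y: "y \<in> carrier A"
  then show "proj_pow A p q ab (x \<otimes> y) = proj_pow A p q ab x \<otimes> proj_pow A p q ab y"
    by (simp add: proj_pow_def p_mult q_mult int_pow_distrib m_ac)
qed simp

lemma endo_action_proj_pow: "endo_action (RDirProd \<Z> \<Z>) A (proj_pow A p q)"
  unfolding endo_action_def
proof (intro conjI ballI)
  fix r s :: "int \<times> int" and x assume x: "x \<in> carrier A"
  show "proj_pow A p q \<one>\<^bsub>RDirProd \<Z> \<Z>\<^esub> x = x"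
    using x by (simp add: Z2_simps proj_pow_def p_mult_q)
  show "proj_pow A p q (r \<oplus>\<^bsub>RDirProd \<Z> \<Z>\<^esub> s) x = proj_pow A p q r x \<otimes> proj_pow A p q s x"
    using x by (simp add: Z2_simps proj_pow_def int_pow_mult m_ac)
  show "proj_pow A p q (r \<otimes>\<^bsub>RDirProd \<Z> \<Z>\<^esub> s) x = proj_pow A p q r (proj_pow A p q s x)"
    using x unfolding proj_pow_def[of A p q r]
    by (simp add: Z2_simps proj_pow_p proj_pow_q) (simp add: proj_pow_def int_pow_pow mult.commute)
qed (rule proj_pow_hom)

end

locale faithful_projections = complementary_projections +
  assumes torsion_free: "torsion_free A"
    and p_nontrivial: "\<exists>x\<in>carrier A. p x \<noteq> \<one>"
    and q_nontrivial: "\<exists>x\<in>carrier A. q x \<noteq> \<one>"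
begin

lemma proj_pow_eq_on_carrier_imp_eq:
  assumes eq: "\<forall>x\<in>carrier A. proj_pow A p q ab x = proj_pow A p q cd x"
  shows "ab = cd"
proof -
  obtain x y where x: "x \<in> carrier A" "p x \<noteq> \<one>" and y: "y \<in> carrier A" "q y \<noteq> \<one>"
    using p_nontrivial q_nontrivial by blast
  have "p x [^] fst ab = p x [^] fst cd"
    using eq[rule_format, of "p x"] x by (simp add: proj_pow_fixed_p p_idem)
  then have "fst ab = fst cd"
    using x by (intro torsion_free_int_pow_inj[OF torsion_free]) simp_all
  moreover have "q y [^] snd ab = q y [^] snd cd"
    using eq[rule_format, of "q y"] y by (simp add: proj_pow_fixed_q q_idem)
  then have "snd ab = snd cd"
    using y by (intro torsion_free_int_pow_inj[OF torsion_free]) simp_all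
  ultimately show ?thesis
    by (simp add: prod_eq_iff)
qed

lemma inj_proj_pow: "inj (proj_pow A p q)"
  by (rule injI) (rule proj_pow_eq_on_carrier_imp_eq, simp)

lemma faithful_action_proj_pow: "faithful_action (RDirProd \<Z> \<Z>) A (proj_pow A p q)"
  unfolding faithful_action_def
  using endo_action_proj_pow proj_pow_eq_on_carrier_imp_eq by blast

lemma proj_pow_not_int_pow: "\<not> (\<forall>x\<in>carrier A. proj_pow A p q (1, 0) x = x [^] (n::int))"
proof
  assume scalar: "\<forall>x\<in>carrier A. proj_pow A p q (1, 0) x = x [^] n"
  have "proj_pow A p q (n, n) x = x [^] n" if "x \<in> carrier A" for x
    using that by (simp add: proj_pow_def p_mult_q flip: int_pow_distrib)
  then have "\<forall>x\<in>carrier A. proj_pow A p q (1, 0) x = proj_pow A p q (n, n) x"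
    using scalar by simp
  then have "(1, 0) = (n, n)"
    by (rule proj_pow_eq_on_carrier_imp_eq)
  then show False
    by auto
qed

end

lemma faithful_action_ring_iso:
  assumes act: "faithful_action R A \<sigma>" and "ring R" and h: "h \<in> ring_iso R S"
  shows "faithful_action S A (\<lambda>s. \<sigma> (inv_into (carrier R) h s))"
proof -
  interpret R: ring R by fact
  have carrier_S: "carrier S = h ` carrier R" and inj: "inj_on h (carrier R)"
    using h by (auto simp: ring_iso_def bij_betw_def)
  have hom: "h \<in> ring_hom R S"
    using h by (simp add: ring_iso_def)
  have inv_h: "inv_into (carrier R) h (h r) = r" if "r \<in> carrier R" for r
    using inv_into_f_f[OF inj that] .
  have one: "inv_into (carrier R) h \<one>\<^bsub>S\<^esub> = \<one>\<^bsub>R\<^esub>"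
    using inv_h[of "\<one>\<^bsub>R\<^esub>"] ring_hom_one[OF hom] by simp
  have add: "inv_into (carrier R) h (h r \<oplus>\<^bsub>S\<^esub> h r') = r \<oplus>\<^bsub>R\<^esub> r'"
    and mult: "inv_into (carrier R) h (h r \<otimes>\<^bsub>S\<^esub> h r') = r \<otimes>\<^bsub>R\<^esub> r'"
    if "r \<in> carrier R" "r' \<in> carrier R" for r r'
    using that by (simp_all add: inv_h flip: ring_hom_add[OF hom] ring_hom_mult[OF hom])
  show ?thesis
    using act unfolding faithful_action_def endo_action_def carrier_S
    by (auto simp: inv_h one add mult)
qed

lemma hom_proj_pow:
  assumes "group M" "group N" and \<phi>: "\<phi> \<in> hom M N" and x: "x \<in> carrier M"
    and "p x \<in> carrier M" "q x \<in> carrier M"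
    and "\<phi> (p x) = p' (\<phi> x)" "\<phi> (q x) = q' (\<phi> x)"
  shows "\<phi> (proj_pow M p q ab x) = proj_pow N p' q' ab (\<phi> x)"
  using assms hom_int_pow[OF \<phi>] by (simp add: proj_pow_def hom_mult[OF \<phi>] group.int_pow_closed)

section \<open>Centres, commutators and groups of class two\<close>

context group
begin

lemma inv_mult_cancel_left: "x \<in> carrier G \<Longrightarrow> a \<in> carrier G \<Longrightarrow> inv x \<otimes> (x \<otimes> a) = a"
  and mult_inv_cancel_left: "x \<in> carrier G \<Longrightarrow> a \<in> carrier G \<Longrightarrow> x \<otimes> (inv x \<otimes> a) = a"
  by (simp_all flip: m_assoc)

lemma comm_closed [simp]: "g \<in> carrier G \<Longrightarrow> h \<in> carrier G \<Longrightarrow> comm G g h \<in> carrier G"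
  by (simp add: comm_def)

lemma comm_mult_left_conj:
  "x \<in> carrier G \<Longrightarrow> y \<in> carrier G \<Longrightarrow> z \<in> carrier G \<Longrightarrow>
    comm G (x \<otimes> y) z = inv y \<otimes> comm G x z \<otimes> y \<otimes> comm G y z"
  by (simp add: comm_def m_assoc inv_mult_group inv_mult_cancel_left mult_inv_cancel_left)

lemma comm_mult_right_conj:
  "x \<in> carrier G \<Longrightarrow> y \<in> carrier G \<Longrightarrow> z \<in> carrier G \<Longrightarrow>
    comm G x (y \<otimes> z) = comm G x z \<otimes> inv z \<otimes> comm G x y \<otimes> z"
  by (simp add: comm_def m_assoc inv_mult_group inv_mult_cancel_left mult_inv_cancel_left)

lemma mult_eq_mult_comm: "g \<in> carrier G \<Longrightarrow> h \<in> carrier G \<Longrightarrow> g \<otimes> h = h \<otimes> g \<otimes> comm G g h"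
  by (simp add: comm_def m_assoc inv_mult_group inv_mult_cancel_left mult_inv_cancel_left)

lemma comm_eq_one_iff: "g \<in> carrier G \<Longrightarrow> h \<in> carrier G \<Longrightarrow> comm G g h = \<one> \<longleftrightarrow> g \<otimes> h = h \<otimes> g"
  by (subst mult_eq_mult_comm[of g h]) simp_all

lemma comm_closed_subgroup: "subgroup S G \<Longrightarrow> a \<in> S \<Longrightarrow> b \<in> S \<Longrightarrow> comm G a b \<in> S"
  by (simp add: comm_def subgroup.m_closed subgroup.m_inv_closed)

lemma comm_in_comm_subgroup: "g \<in> carrier G \<Longrightarrow> h \<in> carrier G \<Longrightarrow> comm G g h \<in> comm_subgroup G"
  unfolding comm_subgroup_def by (rule generate.incl) blast

lemma subgroup_comm_subgroup: "subgroup (comm_subgroup G) G"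
  unfolding comm_subgroup_def by (rule generate_is_subgroup) auto

lemma hom_comm:
  assumes "\<phi> \<in> hom G G" "g \<in> carrier G" "h \<in> carrier G"
  shows "\<phi> (comm G g h) = comm G (\<phi> g) (\<phi> h)"
proof -
  interpret group_hom G G \<phi>
    using assms(1) by unfold_locales
  show ?thesis
    using assms by (simp add: comm_def)
qed

lemma comm_subgroup_hom_image:
  assumes \<phi>: "\<phi> \<in> hom G G"
  shows "\<phi> ` comm_subgroup G \<subseteq> comm_subgroup G"
proof -
  interpret group_hom G G \<phi>
    using \<phi> by unfold_locales
  let ?C = "{comm G g h | g h. g \<in> carrier G \<and> h \<in> carrier G}"
  have "\<phi> ` ?C \<subseteq> ?C"
    using hom_in_carrier[OF \<phi>] by (fastforce simp: hom_comm[OF \<phi>])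
  then have "generate G (\<phi> ` ?C) \<subseteq> generate G ?C"
    by (rule mono_generate)
  moreover have "\<phi> ` generate G ?C = generate G (\<phi> ` ?C)"
    by (intro generate_img[symmetric]) auto
  ultimately show ?thesis
    unfolding comm_subgroup_def by simp
qed

lemma center_closed: "z \<in> grp_center G \<Longrightarrow> z \<in> carrier G"
  and center_commute: "z \<in> grp_center G \<Longrightarrow> g \<in> carrier G \<Longrightarrow> z \<otimes> g = g \<otimes> z"
  unfolding grp_center_def by auto

lemma subgroup_center: "subgroup (grp_center G) G"
proof (rule subgroupI)
  fix z w assume z: "z \<in> grp_center G" and w: "w \<in> grp_center G"
  have "inv z \<otimes> g = g \<otimes> inv z" if g: "g \<in> carrier G" for g
  proof -
    have "inv (z \<otimes> inv g) = inv (inv g \<otimes> z)"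
      using center_commute[OF z, of "inv g"] g by simp
    then show ?thesis
      using z g by (simp add: center_closed inv_mult_group)
  qed
  then show "inv z \<in> grp_center G"
    using z unfolding grp_center_def by blast
  have "z \<otimes> w \<otimes> g = g \<otimes> (z \<otimes> w)" if g: "g \<in> carrier G" for g
  proof -
    have zw: "z \<in> carrier G" "w \<in> carrier G"
      using z w by (simp_all add: center_closed)
    have "z \<otimes> w \<otimes> g = z \<otimes> (g \<otimes> w)"
      using zw g center_commute[OF w g] by (simp add: m_assoc)
    also have "\<dots> = g \<otimes> (z \<otimes> w)"
      using zw g center_commute[OF z g] by (simp flip: m_assoc)
    finally show ?thesis .
  qed
  then show "z \<otimes> w \<in> grp_center G"
    using z w unfolding grp_center_def by blast
qed (auto simp: grp_center_def)

lemma center_normal: "grp_center G \<lhd> G"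
proof (rule normal_invI[OF subgroup_center])
  fix g z assume g: "g \<in> carrier G" and z: "z \<in> grp_center G"
  then have "g \<otimes> z \<otimes> inv g = z"
    using center_commute[OF z g, symmetric] by (simp add: center_closed m_assoc)
  then show "g \<otimes> z \<otimes> inv g \<in> grp_center G"
    using z by simp
qed

lemma comm_center_left: "z \<in> grp_center G \<Longrightarrow> h \<in> carrier G \<Longrightarrow> comm G z h = \<one>"
  and comm_center_right: "z \<in> grp_center G \<Longrightarrow> g \<in> carrier G \<Longrightarrow> comm G g z = \<one>"
  by (simp_all add: comm_eq_one_iff center_closed center_commute[of z])

lemma some_rcos_mem:
  assumes "subgroup N G" "g \<in> carrier G"
  shows "\<exists>n\<in>N. (SOME a. a \<in> N #> g) = n \<otimes> g"
proof -
  have "(SOME a. a \<in> N #> g) \<in> N #> g"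
    using rcos_self[OF assms(2,1)] by (rule someI)
  then show ?thesis
    unfolding r_coset_def by blast
qed

lemma rcos_mult_mem_left:
  assumes N: "subgroup N G" and "n \<in> N" "g \<in> carrier G"
  shows "N #> (n \<otimes> g) = N #> g"
  using assms subgroup.mem_carrier[OF N]
  by (simp flip: coset_mult_assoc add: subgroup.subset subgroup.rcos_const)

lemma rcos_eq_subgroup_iff:
  "subgroup N G \<Longrightarrow> g \<in> carrier G \<Longrightarrow> N #> g = N \<longleftrightarrow> g \<in> N"
  using rcos_self[of g N] subgroup.rcos_const[of N G g] by auto

end

definition induced_endo :: "('a, 'b) monoid_scheme \<Rightarrow> 'a set \<Rightarrow> ('a \<Rightarrow> 'a) \<Rightarrow> 'a set \<Rightarrow> 'a set"
  where "induced_endo G N \<phi> x = N #>\<^bsub>G\<^esub> \<phi> (SOME g. g \<in> x)"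

context normal
begin

lemma induced_endo_rcos:
  assumes \<phi>: "\<phi> \<in> hom G G" "\<phi> ` H \<subseteq> H" and g: "g \<in> carrier G"
  shows "induced_endo G H \<phi> (H #> g) = H #> \<phi> g"
proof -
  obtain n where n: "n \<in> H" "(SOME a. a \<in> H #> g) = n \<otimes> g"
    using some_rcos_mem[OF subgroup_axioms g] by blast
  then have "\<phi> (SOME a. a \<in> H #> g) = \<phi> n \<otimes> \<phi> g" "\<phi> n \<in> H"
    using \<phi> g by (auto simp: hom_mult)
  then show ?thesis
    using \<phi> g by (simp add: induced_endo_def rcos_mult_mem_left subgroup_axioms hom_in_carrier)
qed

lemma induced_endo_hom:
  assumes "\<phi> \<in> hom G G" "\<phi> ` H \<subseteq> H"
  shows "induced_endo G H \<phi> \<in> hom (G Mod H) (G Mod H)"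
  using assms
  by (intro homI) (auto simp: carrier_FactGroup induced_endo_rcos rcos_sum hom_in_carrier hom_mult)

end

locale class_two_group = group +
  assumes comm_subgroup_central: "comm_subgroup G \<subseteq> grp_center G"
begin

lemma comm_central: "g \<in> carrier G \<Longrightarrow> h \<in> carrier G \<Longrightarrow> comm G g h \<in> grp_center G"
  using comm_in_comm_subgroup comm_subgroup_central by blast

lemma comm_mult_left:
  assumes "x \<in> carrier G" "y \<in> carrier G" "z \<in> carrier G"
  shows "comm G (x \<otimes> y) z = comm G x z \<otimes> comm G y z"
proof -
  have "inv y \<otimes> comm G x z = comm G x z \<otimes> inv y"
    using assms by (simp add: center_commute comm_central)
  then show ?thesis
    using assms by (simp add: comm_mult_left_conj m_assoc inv_mult_cancel_left)
qed

lemma comm_mult_right: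
  assumes "x \<in> carrier G" "y \<in> carrier G" "z \<in> carrier G"
  shows "comm G x (y \<otimes> z) = comm G x y \<otimes> comm G x z"
proof -
  have "inv z \<otimes> comm G x y = comm G x y \<otimes> inv z" "comm G x z \<otimes> comm G x y = comm G x y \<otimes> comm G x z"
    using assms by (simp_all add: center_commute comm_central)
  then show ?thesis
    using assms by (simp add: comm_mult_right_conj m_assoc inv_mult_cancel_left)
qed

lemma comm_hom_left: "h \<in> carrier G \<Longrightarrow> (\<lambda>g. comm G g h) \<in> hom G G"
  by (rule homI) (simp_all add: comm_mult_left)

lemma comm_nat_pow_left:
  "g \<in> carrier G \<Longrightarrow> h \<in> carrier G \<Longrightarrow> comm G (g [^] (n::nat)) h = comm G g h [^] n"
  using hom_nat_pow[OF comm_hom_left] is_group by simp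

lemma fcomm_rcos:
  assumes g: "g \<in> carrier G" and h: "h \<in> carrier G"
  shows "fcomm G (grp_center G #> g) (grp_center G #> h) = comm G g h"
proof -
  obtain z w where z: "z \<in> grp_center G" "(SOME a. a \<in> grp_center G #> g) = z \<otimes> g"
    and w: "w \<in> grp_center G" "(SOME a. a \<in> grp_center G #> h) = w \<otimes> h"
    using some_rcos_mem[OF subgroup_center g] some_rcos_mem[OF subgroup_center h] by blast
  have "fcomm G (grp_center G #> g) (grp_center G #> h) = comm G (z \<otimes> g) (w \<otimes> h)"
    by (simp add: fcomm_def z w)
  also have "\<dots> = comm G g h"
    using z w g h
    by (simp add: center_closed comm_mult_left comm_mult_right comm_center_left comm_center_right)
  finally show ?thesis .
qed

lemma Mgrp_carrier: "carrier (Mgrp G) = rcosets (grp_center G)"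
  by (simp add: Mgrp_def FactGroup_def)

lemma Mgrp_rcos_closed: "g \<in> carrier G \<Longrightarrow> grp_center G #> g \<in> carrier (Mgrp G)"
  by (simp add: Mgrp_carrier rcosetsI subgroup.subset[OF subgroup_center])

lemma Mgrp_rcos_mult:
  "g \<in> carrier G \<Longrightarrow> h \<in> carrier G \<Longrightarrow>
    (grp_center G #> g) \<otimes>\<^bsub>Mgrp G\<^esub> (grp_center G #> h) = grp_center G #> (g \<otimes> h)"
  by (simp add: Mgrp_def normal.rcos_sum[OF center_normal])

lemma Mgrp_one: "\<one>\<^bsub>Mgrp G\<^esub> = grp_center G"
  by (simp add: Mgrp_def)

lemma Mgrp_rcos_nat_pow:
  "g \<in> carrier G \<Longrightarrow> (grp_center G #> g) [^]\<^bsub>Mgrp G\<^esub> (n::nat) = grp_center G #> (g [^] n)"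
  unfolding Mgrp_def by (rule normal.FactGroup_pow[OF center_normal])

lemma comm_group_Mgrp: "comm_group (Mgrp G)"
proof (rule group.group_comm_groupI)
  show "group (Mgrp G)"
    unfolding Mgrp_def by (rule normal.factorgroup_is_group[OF center_normal])
  fix x y assume "x \<in> carrier (Mgrp G)" "y \<in> carrier (Mgrp G)"
  then obtain g h where gh: "g \<in> carrier G" "h \<in> carrier G"
    and xy: "x = grp_center G #> g" "y = grp_center G #> h"
    by (auto simp: Mgrp_carrier RCOSETS_def)
  have "grp_center G #> (g \<otimes> h) = grp_center G #> (comm G g h \<otimes> (h \<otimes> g))"
    using gh mult_eq_mult_comm[OF gh] center_commute[OF comm_central[OF gh], of "h \<otimes> g"] by simp
  also have "\<dots> = grp_center G #> (h \<otimes> g)"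
    using gh comm_central[OF gh] by (simp add: rcos_mult_mem_left subgroup_center)
  finally show "x \<otimes>\<^bsub>Mgrp G\<^esub> y = y \<otimes>\<^bsub>Mgrp G\<^esub> x"
    using gh xy by (simp add: Mgrp_rcos_mult)
qed

lemma fcomm_hom_left:
  assumes "y \<in> carrier (Mgrp G)" shows "(\<lambda>x. fcomm G x y) \<in> hom (Mgrp G) (Ngrp G)"
proof -
  obtain h where h: "h \<in> carrier G" "y = grp_center G #> h"
    using assms by (auto simp: Mgrp_carrier RCOSETS_def)
  show ?thesis
    by (rule homI)
      (use h in \<open>auto simp: Mgrp_carrier RCOSETS_def Ngrp_def fcomm_rcos Mgrp_rcos_mult
                              comm_mult_left comm_in_comm_subgroup\<close>)
qed

lemma fcomm_hom_right:
  assumes "x \<in> carrier (Mgrp G)" shows "(\<lambda>y. fcomm G x y) \<in> hom (Mgrp G) (Ngrp G)"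
proof -
  obtain g where g: "g \<in> carrier G" "x = grp_center G #> g"
    using assms by (auto simp: Mgrp_carrier RCOSETS_def)
  show ?thesis
    by (rule homI)
      (use g in \<open>auto simp: Mgrp_carrier RCOSETS_def Ngrp_def fcomm_rcos Mgrp_rcos_mult
                              comm_mult_right comm_in_comm_subgroup\<close>)
qed

lemma comm_group_Ngrp: "comm_group (Ngrp G)"
proof (rule group.group_comm_groupI)
  show "group (Ngrp G)"
    unfolding Ngrp_def by (rule subgroup_imp_group[OF subgroup_comm_subgroup])
  fix x y assume "x \<in> carrier (Ngrp G)" "y \<in> carrier (Ngrp G)"
  then show "x \<otimes>\<^bsub>Ngrp G\<^esub> y = y \<otimes>\<^bsub>Ngrp G\<^esub> x"
    using comm_subgroup_central subgroup.mem_carrier[OF subgroup_comm_subgroup]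
    by (auto simp: Ngrp_def center_commute)
qed

lemma torsion_free_Ngrp: "torsion_free G \<Longrightarrow> torsion_free (Ngrp G)"
  using subgroup.mem_carrier[OF subgroup_comm_subgroup]
  by (simp add: torsion_free_def Ngrp_def flip: nat_pow_consistent)

lemma torsion_free_Mgrp:
  assumes tf: "torsion_free G" shows "torsion_free (Mgrp G)"
  unfolding torsion_free_def
proof (intro ballI allI impI)
  fix x and n :: nat
  assume x: "x \<in> carrier (Mgrp G)" and n: "0 < n \<and> x [^]\<^bsub>Mgrp G\<^esub> n = \<one>\<^bsub>Mgrp G\<^esub>"
  obtain g where g: "g \<in> carrier G" "x = grp_center G #> g"
    using x by (auto simp: Mgrp_carrier RCOSETS_def)
  have "g [^] n \<in> grp_center G"
    using n g by (simp add: Mgrp_rcos_nat_pow Mgrp_one rcos_eq_subgroup_iff subgroup_center)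
  then have "comm G g h [^] n = \<one>" if "h \<in> carrier G" for h
    using g that by (simp add: comm_nat_pow_left[symmetric] comm_center_left)
  then have "comm G g h = \<one>" if "h \<in> carrier G" for h
    using tf[unfolded torsion_free_def, rule_format, of "comm G g h" n] n that g by simp
  then have "g \<in> grp_center G"
    using g by (simp add: grp_center_def comm_eq_one_iff)
  then show "x = \<one>\<^bsub>Mgrp G\<^esub>"
    using g by (simp add: Mgrp_one rcos_eq_subgroup_iff subgroup_center)
qed

lemma noncommuting_nontrivial:
  assumes "g \<in> carrier G" "h \<in> carrier G" "g \<otimes> h \<noteq> h \<otimes> g"
  shows "grp_center G #> g \<noteq> \<one>\<^bsub>Mgrp G\<^esub>" and "comm G g h \<noteq> \<one>"
  using assms
  by (auto simp: Mgrp_one rcos_eq_subgroup_iff subgroup_center comm_eq_one_iff dest: center_commute)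

end

section \<open>Internal direct products\<close>

locale internal_direct_product = group G for G (structure) +
  fixes H K :: "'a set"
  assumes H_normal: "H \<lhd> G" and K_normal: "K \<lhd> G"
    and inter_trivial: "H \<inter> K = {\<one>}" and mult_eq_carrier: "H <#> K = carrier G"
begin

definition projH :: "'a \<Rightarrow> 'a" where "projH g = (THE h. h \<in> H \<and> (\<exists>k\<in>K. g = h \<otimes> k))"
definition projK :: "'a \<Rightarrow> 'a" where "projK g = (THE k. k \<in> K \<and> (\<exists>h\<in>H. g = h \<otimes> k))"

lemma H_subgroup: "subgroup H G" and K_subgroup: "subgroup K G"
  using H_normal K_normal by (simp_all add: normal_imp_subgroup)

lemma H_closed: "h \<in> H \<Longrightarrow> h \<in> carrier G" and K_closed: "k \<in> K \<Longrightarrow> k \<in> carrier G"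
  using H_subgroup K_subgroup by (simp_all add: subgroup.mem_carrier)

lemma H_K_commute: "h \<in> H \<Longrightarrow> k \<in> K \<Longrightarrow> h \<otimes> k = k \<otimes> h"
  using normal_imp_commuting[OF H_normal K_normal] inter_trivial by simp

lemma decomposition_unique:
  assumes "h \<in> H" "h' \<in> H" "k \<in> K" "k' \<in> K" "h \<otimes> k = h' \<otimes> k'"
  shows "h = h' \<and> k = k'"
proof -
  interpret group_disjoint_sum G H K
    by (intro group_disjoint_sum.intro is_group H_subgroup K_subgroup)
  show ?thesis
    using cancel inter_trivial assms by blast
qed

lemma proj_mult:
  assumes "h \<in> H" "k \<in> K" shows "projH (h \<otimes> k) = h" "projK (h \<otimes> k) = k"
  using assms decomposition_unique unfolding projH_def projK_def
  by blast+

lemma proj_decomposition: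
  assumes "g \<in> carrier G" shows "projH g \<in> H" "projK g \<in> K" "projH g \<otimes> projK g = g"
proof -
  obtain h k where "h \<in> H" "k \<in> K" "g = h \<otimes> k"
    using assms mult_eq_carrier unfolding set_mult_def by blast
  then show "projH g \<in> H" "projK g \<in> K" "projH g \<otimes> projK g = g"
    by (simp_all add: proj_mult)
qed

lemma proj_closed [simp]: "g \<in> carrier G \<Longrightarrow> projH g \<in> carrier G"
  "g \<in> carrier G \<Longrightarrow> projK g \<in> carrier G"
  using proj_decomposition H_closed K_closed by blast+

lemma projH_H: "h \<in> H \<Longrightarrow> projH h = h" and projK_H: "h \<in> H \<Longrightarrow> projK h = \<one>"
  using proj_mult[of h \<one>] subgroup.one_closed[OF K_subgroup] H_closed by auto

lemma projH_K: "k \<in> K \<Longrightarrow> projH k = \<one>" and projK_K: "k \<in> K \<Longrightarrow> projK k = k"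
  using proj_mult[of \<one> k] subgroup.one_closed[OF H_subgroup] K_closed by auto

lemma proj_mult_hom:
  assumes g: "g \<in> carrier G" and g': "g' \<in> carrier G"
  shows "projH (g \<otimes> g') = projH g \<otimes> projH g'" "projK (g \<otimes> g') = projK g \<otimes> projK g'"
proof -
  obtain h k h' k' where hk: "h \<in> H" "k \<in> K" "h' \<in> H" "k' \<in> K"
    and gg': "g = h \<otimes> k" "g' = h' \<otimes> k'"
    using proj_decomposition[OF g] proj_decomposition[OF g'] by metis
  note c = hk(1,3)[THEN H_closed] hk(2,4)[THEN K_closed]
  have "g \<otimes> g' = h \<otimes> (k \<otimes> h') \<otimes> k'"
    using c by (simp add: gg' m_assoc)
  also have "\<dots> = (h \<otimes> h') \<otimes> (k \<otimes> k')"
    using c by (simp add: H_K_commute[OF hk(3,2), symmetric] m_assoc)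
  finally show "projH (g \<otimes> g') = projH g \<otimes> projH g'" "projK (g \<otimes> g') = projK g \<otimes> projK g'"
    using hk H_subgroup K_subgroup by (simp_all add: gg' proj_mult subgroup.m_closed)
qed

lemma projH_hom: "projH \<in> hom G G" and projK_hom: "projK \<in> hom G G"
  by (auto intro!: homI simp: proj_mult_hom)

lemma projH_center:
  assumes z: "z \<in> grp_center G" shows "projH z \<in> grp_center G"
proof -
  have zc: "z \<in> carrier G"
    using z by (rule center_closed)
  have "projH z \<otimes> g = g \<otimes> projH z" if g: "g \<in> carrier G" for g
  proof -
    note d = proj_decomposition[OF g]
    have HH: "projH z \<otimes> projH g = projH g \<otimes> projH z"
      using center_commute[OF z g] zc g by (simp flip: proj_mult_hom)
    have HK: "projH z \<otimes> projK g = projK g \<otimes> projH z"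
      using H_K_commute[OF proj_decomposition(1)[OF zc] d(2)] .
    have "projH z \<otimes> g = projH z \<otimes> projH g \<otimes> projK g"
      using zc g d(3) by (simp add: m_assoc)
    also have "\<dots> = projH g \<otimes> (projK g \<otimes> projH z)"
      using zc g by (simp add: HH HK[symmetric] m_assoc)
    also have "\<dots> = g \<otimes> projH z"
      using zc g by (simp add: d(3) flip: m_assoc)
    finally show ?thesis .
  qed
  then show ?thesis
    using zc unfolding grp_center_def by simp
qed

lemma projK_center:
  assumes z: "z \<in> grp_center G" shows "projK z \<in> grp_center G"
proof -
  have "projK z = inv (projH z) \<otimes> z"
    using proj_decomposition(3)[of z] z by (simp add: center_closed inv_solve_left)
  then show ?thesis
    using z projH_center subgroup_center
    by (simp add: subgroup.m_closed subgroup.m_inv_closed)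
qed

end

section \<open>Direct products of groups of class two\<close>

locale class_two_direct_product = class_two_group G + internal_direct_product G H K
  for G :: "('a, 'b) monoid_scheme" (structure) and H K
begin

abbreviation projMH where "projMH \<equiv> induced_endo G (grp_center G) projH"
abbreviation projMK where "projMK \<equiv> induced_endo G (grp_center G) projK"

lemma projM_rcos:
  "g \<in> carrier G \<Longrightarrow> projMH (grp_center G #> g) = grp_center G #> projH g"
  "g \<in> carrier G \<Longrightarrow> projMK (grp_center G #> g) = grp_center G #> projK g"
  using normal.induced_endo_rcos[OF center_normal] projH_hom projK_hom projH_center projK_center
  by auto

lemma complementary_projections_Mgrp: "complementary_projections (Mgrp G) projMH projMK"
proof (intro complementary_projections.intro complementary_projections_axioms.intro comm_group_Mgrp)
  show "projMH \<in> hom (Mgrp G) (Mgrp G)" "projMK \<in> hom (Mgrp G) (Mgrp G)"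
    unfolding Mgrp_def using normal.induced_endo_hom[OF center_normal]
      projH_hom projK_hom projH_center projK_center by auto
  fix x assume "x \<in> carrier (Mgrp G)"
  then obtain g where g: "g \<in> carrier G" "x = grp_center G #> g"
    by (auto simp: Mgrp_carrier RCOSETS_def)
  then show "projMH x \<otimes>\<^bsub>Mgrp G\<^esub> projMK x = x"
    by (simp add: projM_rcos Mgrp_rcos_mult proj_decomposition)
  show "projMH (projMK x) = \<one>\<^bsub>Mgrp G\<^esub>" "projMK (projMH x) = \<one>\<^bsub>Mgrp G\<^esub>"
    using g proj_decomposition[OF g(1)]
    by (simp_all add: projM_rcos projH_K projK_H Mgrp_one coset_mult_one center_closed subsetI)
qed

lemma complementary_projections_Ngrp: "complementary_projections (Ngrp G) projH projK"
proof (intro complementary_projections.intro complementary_projections_axioms.intro comm_group_Ngrp)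
  have closed: "projH c \<in> comm_subgroup G" "projK c \<in> comm_subgroup G" if "c \<in> comm_subgroup G" for c
    using that comm_subgroup_hom_image[OF projH_hom] comm_subgroup_hom_image[OF projK_hom] by auto
  have c: "c \<in> carrier G" if "c \<in> comm_subgroup G" for c
    using that subgroup.mem_carrier[OF subgroup_comm_subgroup] by blast
  show "projH \<in> hom (Ngrp G) (Ngrp G)" "projK \<in> hom (Ngrp G) (Ngrp G)"
    by (auto intro!: homI simp: Ngrp_def closed c proj_mult_hom)
  fix x assume "x \<in> carrier (Ngrp G)"
  then have x: "x \<in> carrier G"
    by (simp add: Ngrp_def c)
  then show "projH x \<otimes>\<^bsub>Ngrp G\<^esub> projK x = x"
    by (simp add: Ngrp_def proj_decomposition)
  show "projH (projK x) = \<one>\<^bsub>Ngrp G\<^esub>" "projK (projH x) = \<one>\<^bsub>Ngrp G\<^esub>"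
    using x by (simp_all add: Ngrp_def projH_K projK_H proj_decomposition)
qed

lemma comm_H_K: "h \<in> H \<Longrightarrow> k \<in> K \<Longrightarrow> comm G h k = \<one> \<and> comm G k h = \<one>"
  using H_K_commute[of h k] H_closed[of h] K_closed[of k] by (simp add: comm_eq_one_iff)

lemma comm_proj:
  assumes g: "g \<in> carrier G" and h: "h \<in> carrier G"
  shows "comm G (projH g) h = projH (comm G g h)" "comm G g (projH h) = projH (comm G g h)"
    "comm G (projK g) h = projK (comm G g h)" "comm G g (projK h) = projK (comm G g h)"
proof -
  note dg = proj_decomposition[OF g] and dh = proj_decomposition[OF h]
  have "comm G (projH g) h = comm G (projH g) (projH h) \<otimes> comm G (projH g) (projK h)"
    "comm G (projK g) h = comm G (projK g) (projH h) \<otimes> comm G (projK g) (projK h)"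
    using comm_mult_right dg(3) dh(3) g h by (metis proj_closed)+
  moreover have "comm G g (projH h) = comm G (projH g) (projH h) \<otimes> comm G (projK g) (projH h)"
    "comm G g (projK h) = comm G (projH g) (projK h) \<otimes> comm G (projK g) (projK h)"
    using comm_mult_left dg(3) dh(3) g h by (metis proj_closed)+
  ultimately show "comm G (projH g) h = projH (comm G g h)" "comm G g (projH h) = projH (comm G g h)"
    "comm G (projK g) h = projK (comm G g h)" "comm G g (projK h) = projK (comm G g h)"
    using dg dh g h comm_H_K
    by (simp_all add: hom_comm[OF projH_hom] hom_comm[OF projK_hom])
qed

lemma fcomm_projM:
  assumes "x \<in> carrier (Mgrp G)" "y \<in> carrier (Mgrp G)"
  shows "fcomm G (projMH x) y = projH (fcomm G x y)" "fcomm G x (projMH y) = projH (fcomm G x y)"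
    "fcomm G (projMK x) y = projK (fcomm G x y)" "fcomm G x (projMK y) = projK (fcomm G x y)"
  using assms by (auto simp: Mgrp_carrier RCOSETS_def projM_rcos fcomm_rcos comm_proj)

lemma projH_nontrivial:
  assumes "\<not> abelian_subset G H"
  shows "\<exists>x\<in>carrier (Mgrp G). projMH x \<noteq> \<one>\<^bsub>Mgrp G\<^esub>" "\<exists>c\<in>carrier (Ngrp G). projH c \<noteq> \<one>\<^bsub>Ngrp G\<^esub>"
proof -
  obtain a b where ab: "a \<in> H" "b \<in> H" "a \<otimes> b \<noteq> b \<otimes> a"
    using assms unfolding abelian_subset_def by blast
  then have abc: "a \<in> carrier G" "b \<in> carrier G"
    by (simp_all add: H_closed)
  show "\<exists>x\<in>carrier (Mgrp G). projMH x \<noteq> \<one>\<^bsub>Mgrp G\<^esub>"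
    using ab abc noncommuting_nontrivial(1)[OF abc ab(3)]
    by (intro bexI[of _ "grp_center G #> a"]) (auto simp: projM_rcos projH_H Mgrp_rcos_closed)
  show "\<exists>c\<in>carrier (Ngrp G). projH c \<noteq> \<one>\<^bsub>Ngrp G\<^esub>"
    using ab abc noncommuting_nontrivial(2)[OF abc ab(3)]
    by (intro bexI[of _ "comm G a b"])
      (auto simp: Ngrp_def projH_H comm_closed_subgroup H_subgroup comm_in_comm_subgroup)
qed

lemma projK_nontrivial:
  assumes "\<not> abelian_subset G K"
  shows "\<exists>x\<in>carrier (Mgrp G). projMK x \<noteq> \<one>\<^bsub>Mgrp G\<^esub>" "\<exists>c\<in>carrier (Ngrp G). projK c \<noteq> \<one>\<^bsub>Ngrp G\<^esub>"
proof -
  obtain a b where ab: "a \<in> K" "b \<in> K" "a \<otimes> b \<noteq> b \<otimes> a"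
    using assms unfolding abelian_subset_def by blast
  then have abc: "a \<in> carrier G" "b \<in> carrier G"
    by (simp_all add: K_closed)
  show "\<exists>x\<in>carrier (Mgrp G). projMK x \<noteq> \<one>\<^bsub>Mgrp G\<^esub>"
    using ab abc noncommuting_nontrivial(1)[OF abc ab(3)]
    by (intro bexI[of _ "grp_center G #> a"]) (auto simp: projM_rcos projK_K Mgrp_rcos_closed)
  show "\<exists>c\<in>carrier (Ngrp G). projK c \<noteq> \<one>\<^bsub>Ngrp G\<^esub>"
    using ab abc noncommuting_nontrivial(2)[OF abc ab(3)]
    by (intro bexI[of _ "comm G a b"])
      (auto simp: Ngrp_def projK_K comm_closed_subgroup K_subgroup comm_in_comm_subgroup)
qed

lemma faithful_projections_Mgrp_Ngrp:
  assumes "torsion_free G" "\<not> abelian_subset G H" "\<not> abelian_subset G K"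
  shows "faithful_projections (Mgrp G) projMH projMK" "faithful_projections (Ngrp G) projH projK"
  using assms complementary_projections_Mgrp complementary_projections_Ngrp
    torsion_free_Mgrp torsion_free_Ngrp projH_nontrivial projK_nontrivial
  by (simp_all add: faithful_projections_def faithful_projections_axioms_def)

text \<open>Maximality of \<open>\<int>\<close> only speaks about rings of maps on \<open>M\<close>, so \<open>\<int> \<times> \<int>\<close> is
  transported along its faithful action \<open>e\<close> to its image in \<open>End(M)\<close>.\<close>

lemma pair_ring_of_scalars:
  assumes M: "faithful_projections (Mgrp G) projMH projMK"
    and N: "faithful_projections (Ngrp G) projH projK"
  defines "e \<equiv> proj_pow (Mgrp G) projMH projMK"
  shows "ring_of_scalars G (image_ring e (RDirProd \<Z> \<Z>))
           (\<lambda>r. e (inv_into UNIV e r)) (\<lambda>r. proj_pow (Ngrp G) projH projK (inv_into UNIV e r))"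
proof -
  interpret M: faithful_projections "Mgrp G" projMH projMK by (rule M)
  interpret N: faithful_projections "Ngrp G" projH projK by (rule N)
  have "inj e"
    unfolding e_def by (rule M.inj_proj_pow)
  then have iso: "e \<in> ring_iso (RDirProd \<Z> \<Z>) (image_ring e (RDirProd \<Z> \<Z>))"
    by (intro inj_imp_image_ring_iso) (simp add: Z2_simps)
  have Z2: "ring (RDirProd \<Z> \<Z>)"
    using Z2_cring by (rule cring.axioms(1))
  have "image_ring e (RDirProd \<Z> \<Z>) \<lparr>zero := e \<zero>\<^bsub>RDirProd \<Z> \<Z>\<^esub>\<rparr> = image_ring e (RDirProd \<Z> \<Z>)"
    by (simp flip: image_ring_zero)
  then have "cring (image_ring e (RDirProd \<Z> \<Z>))"
    using cring.ring_iso_imp_img_cring[OF Z2_cring iso] by simp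
  moreover have "faithful_action (image_ring e (RDirProd \<Z> \<Z>)) (Mgrp G) (\<lambda>r. e (inv_into UNIV e r))"
    using faithful_action_ring_iso[OF M.faithful_action_proj_pow Z2 iso] by (simp add: Z2_simps e_def)
  moreover have "faithful_action (image_ring e (RDirProd \<Z> \<Z>)) (Ngrp G)
      (\<lambda>r. proj_pow (Ngrp G) projH projK (inv_into UNIV e r))"
    using faithful_action_ring_iso[OF N.faithful_action_proj_pow Z2 iso] by (simp add: Z2_simps)
  moreover have "fcomm G (proj_pow (Mgrp G) projMH projMK ab x) y = proj_pow (Ngrp G) projH projK ab (fcomm G x y)"
    "fcomm G x (proj_pow (Mgrp G) projMH projMK ab y) = proj_pow (Ngrp G) projH projK ab (fcomm G x y)"
    if "x \<in> carrier (Mgrp G)" "y \<in> carrier (Mgrp G)" for ab x y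
    using that hom_proj_pow[OF M.is_group N.is_group fcomm_hom_left[of y]]
      hom_proj_pow[OF M.is_group N.is_group fcomm_hom_right[of x]]
    by (simp_all add: fcomm_projM)
  ultimately show ?thesis
    unfolding ring_of_scalars_def by (auto simp: image_ring_carrier e_def)
qed

end

theorem proposition3p4:
  fixes G :: "('a, 'b) monoid_scheme"
  assumes "group G"
    and "finitely_generated G"
    and "torsion_free G"
    and "two_step_nilpotent G"
    and "maximal_scalars_is_Z G"
  shows "\<not> (\<exists>H K. H \<lhd> G \<and> K \<lhd> G \<and> H \<inter> K = {\<one>\<^bsub>G\<^esub>} \<and> H <#>\<^bsub>G\<^esub> K = carrier G \<and>
                \<not> abelian_subset G H \<and> \<not> abelian_subset G K)"
proof
  assume "\<exists>H K. H \<lhd> G \<and> K \<lhd> G \<and> H \<inter> K = {\<one>\<^bsub>G\<^esub>} \<and> H <#>\<^bsub>G\<^esub> K = carrier G \<and>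
                \<not> abelian_subset G H \<and> \<not> abelian_subset G K"
  then obtain H K where HK: "H \<lhd> G" "K \<lhd> G" "H \<inter> K = {\<one>\<^bsub>G\<^esub>}" "H <#>\<^bsub>G\<^esub> K = carrier G"
    and nonabelian: "\<not> abelian_subset G H" "\<not> abelian_subset G K"
    by blast
  interpret class_two_direct_product G H K
    using assms(1,4) HK
    by (simp add: class_two_direct_product_def class_two_group_def class_two_group_axioms_def
        internal_direct_product_def internal_direct_product_axioms_def two_step_nilpotent_def)
  note faithful = faithful_projections_Mgrp_Ngrp[OF assms(3) nonabelian]
  interpret M: faithful_projections "Mgrp G" projMH projMK by (rule faithful(1))
  let ?e = "proj_pow (Mgrp G) projMH projMK"
  have "\<forall>(R :: ('a set \<Rightarrow> 'a set) ring) \<rho>M \<rho>N. ring_of_scalars G R \<rho>M \<rho>N \<longrightarrow>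
      (\<forall>r \<in> carrier R. \<exists>n::int. \<forall>x \<in> carrier (Mgrp G). \<rho>M r x = x [^]\<^bsub>Mgrp G\<^esub> n)"
    using assms(5) unfolding maximal_scalars_is_Z_def by (rule conjunct2)
  from this[rule_format, OF pair_ring_of_scalars[OF faithful], of "?e (1, 0)"]
  obtain n :: int where "\<forall>x\<in>carrier (Mgrp G). ?e (1, 0) x = x [^]\<^bsub>Mgrp G\<^esub> n"
    using M.inj_proj_pow by (auto simp: image_ring_carrier Z2_simps)
  then show False
    using M.proj_pow_not_int_pow by blast
qed

end
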